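(* Let $S=p_1,\ldots,p_n$ have independent entries uniform on $[0,1]$, and let $x=x_1x_2\ldots$ and $y=y_1y_2\ldots$ be two independent traces of $S$. Fix the deletion patterns of both traces, and consider two length-$w$ windows $x_{i},\ldots,x_{i+w-1}$ and $y_j,\ldots,y_{j+w-1}$. Let $q$ be the number of $t\in\{0,\ldots,w-1\}$ such that $x_{i+t}$ and $y_{j+t}$ originate from the same original position $k$ (i.e. both are flips of the same $p_k$), and let $r=w-q$. Then for every $\beta>0$, with probability taken over the randomness of $S$ and the coin flips (but not the deletions), $$\Pr\left[\left|\sum_{t=0}^{w-1}|x_{i+t}-y_{j+t}|-\left(\frac q3+\frac r2\right)\right|\ge\beta\right]\le2\exp\left(\frac{-2\beta^2}{w}\right).$$
   Context: A trace of $S=p_1,\ldots,p_n$ with deletion probability $\delta$: sample independent bits $t_k$ with $\Pr[t_k=1]=p_k$, delete each independently with probability $\delta$, and concatenate the surviving bits; each surviving bit thus originates from a specific original position $k$. *)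

theory Defs
  imports "HOL-Probability.Probability"
begin

text \<open>Joint distribution of the coin flips of two independent traces of S = p_0..p_(n-1).
  First sample p_k iid uniform on [0,1]; then, given p, sample independent bits
  omega (k, True) ~ Bernoulli(p_k) (flip of position k in trace x) and
  omega (k, False) ~ Bernoulli(p_k) (flip of position k in trace y).
  Positions are 0-indexed. Deletions are fixed and handled separately.\<close>

definition coins_dist :: "nat \<Rightarrow> ((nat \<times> bool) \<Rightarrow> bool) measure" where
  "coins_dist n =
     Giry_Monad.bind (PiM {..<n} (\<lambda>_. uniform_measure lborel {0..1::real}))
       (\<lambda>p. PiM ({..<n} \<times> UNIV) (\<lambda>kc. measure_pmf (bernoulli_pmf (p (fst kc)))))"

text \<open>Given the (fixed) set D of surviving original positions, the m-th bit (0-indexed)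
  of the trace originates from original position trace_origin D m.\<close>

definition trace_origin :: "nat set \<Rightarrow> nat \<Rightarrow> nat" where
  "trace_origin D m = sorted_list_of_set D ! m"

end

theory Submission
  imports Defs
begin

text \<open>Once the uniform bias p_k is integrated out, the two flips of position k are fair coins
  that agree with probability 2/3, independently over k. Both windows visit original positions in
  increasing order, so the largest position read by the t-th comparison is read by no earlier one;
  resampling that position alone shows that the t-th mismatch indicator is Bernoulli(1/3) when both
  bits come from the same position and Bernoulli(1/2) otherwise, independently of the earlier
  indicators. The number of mismatches is thus a sum of w independent Bernoulli variables with mean
  q/3 + r/2, and Hoeffding's inequality gives the bound.\<close>

lemma map_pmf_xor_bernoulli_half: "map_pmf (\<lambda>x. x \<noteq> e) (bernoulli_pmf (1/2)) = bernoulli_pmf (1/2)"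
proof (rule pmf_eqI)
  fix y
  have "pmf (map_pmf (\<lambda>x. x \<noteq> e) (bernoulli_pmf (1/2))) ((\<lambda>x. x \<noteq> e) (y \<noteq> e))
      = pmf (bernoulli_pmf (1/2)) (y \<noteq> e)"
    by (rule pmf_map_inj') (auto simp: inj_on_def)
  moreover have "(\<lambda>x. x \<noteq> e) (y \<noteq> e) = y" by auto
  ultimately show "pmf (map_pmf (\<lambda>x. x \<noteq> e) (bernoulli_pmf (1/2))) y = pmf (bernoulli_pmf (1/2)) y"
    by (cases y) simp_all
qed

lemma map_pair_pmf_fibrewise:
  assumes "\<And>f. map_pmf (h f) A = B"
  shows "map_pmf (\<lambda>(y, f). (h f y, g f)) (pair_pmf A P) = pair_pmf B (map_pmf g P)"
proof -
  have "map_pmf (\<lambda>(y, f). (h f y, g f)) (pair_pmf A P)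
      = P \<bind> (\<lambda>f. map_pmf (\<lambda>z. (z, g f)) (map_pmf (h f) A))"
    unfolding pair_pmf_def map_pmf_def
    by (subst bind_commute_pmf) (simp add: bind_assoc_pmf bind_return_pmf)
  also have "\<dots> = P \<bind> (\<lambda>f. map_pmf (\<lambda>z. (z, g f)) B)"
    by (simp only: assms)
  also have "\<dots> = pair_pmf B (map_pmf g P)"
    unfolding pair_pmf_def map_pmf_def
    by (subst bind_commute_pmf) (simp add: bind_assoc_pmf bind_return_pmf)
  finally show ?thesis .
qed

lemma Pi_pmf_remove:
  assumes "finite A" "c \<in> A"
  shows "Pi_pmf A d p = map_pmf (\<lambda>(y, f). f(c := y)) (pair_pmf (p c) (Pi_pmf (A - {c}) d p))"
  using assms by (subst Pi_pmf_insert[symmetric]) (auto simp: insert_absorb)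

lemma map_pmf_Pi_pmf_remove_irrelevant:
  assumes "finite A" "c \<in> A" and "\<And>f y. F (f(c := y)) = F f"
  shows "map_pmf F (Pi_pmf A d p) = map_pmf F (Pi_pmf (A - {c}) d p)"
proof -
  have "map_pmf F (Pi_pmf A d p) = map_pmf F (map_pmf snd (pair_pmf (p c) (Pi_pmf (A - {c}) d p)))"
    unfolding Pi_pmf_remove[OF assms(1,2)] pmf.map_comp by (simp add: o_def case_prod_beta assms(3))
  then show ?thesis by (simp only: map_snd_pair_pmf)
qed

lemma Hoeffding_Pi_pmf_bernoulli:
  fixes \<rho> :: "'a \<Rightarrow> real"
  assumes I: "finite I" "I \<noteq> {}" and "\<beta> \<ge> 0" and \<rho>: "\<And>t. t \<in> I \<Longrightarrow> 0 \<le> \<rho> t \<and> \<rho> t \<le> 1"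
  shows "measure_pmf.prob (Pi_pmf I False (\<lambda>t. bernoulli_pmf (\<rho> t)))
           {z. \<bar>(\<Sum>t\<in>I. of_bool (z t) :: real) - (\<Sum>t\<in>I. \<rho> t)\<bar> \<ge> \<beta>}
         \<le> 2 * exp (-2 * \<beta>\<^sup>2 / real (card I))"
proof -
  let ?Z = "Pi_pmf I False (\<lambda>t. bernoulli_pmf (\<rho> t))"
  have mean: "measure_pmf.expectation ?Z (\<lambda>z. of_bool (z t)) = \<rho> t" if "t \<in> I" for t
  proof -
    have "measure_pmf.expectation ?Z (\<lambda>z. of_bool (z t))
        = measure_pmf.expectation (map_pmf (\<lambda>z. z t) ?Z) (\<lambda>x. of_bool x :: real)"
      by simp
    also have "\<dots> = \<rho> t"
      using that \<rho>[OF that] I by (subst Pi_pmf_component) auto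
    finally show ?thesis .
  qed
  interpret Hoeffding_ineq ?Z I "\<lambda>t z. of_bool (z t) :: real" "\<lambda>_. 0" "\<lambda>_. 1" "\<Sum>t\<in>I. \<rho> t"
  proof unfold_locales
    show "prob_space.indep_vars ?Z (\<lambda>_. borel) (\<lambda>t z. of_bool (z t) :: real) I"
      by (rule prob_space.indep_vars_compose2[OF measure_pmf.prob_space_axioms
            indep_vars_Pi_pmf[OF I(1)]]) auto
  qed (use I(1) mean in auto)
  show ?thesis
    using Hoeffding_ineq_abs_ge[OF \<open>\<beta> \<ge> 0\<close>] I by (simp add: card_gt_0_iff del: sum_of_bool_eq)
qed

lemma pmf_bernoulli_pmf: "pmf (bernoulli_pmf p) b = (let p' = min 1 (max 0 p) in if b then p' else 1 - p')"
proof -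
  interpret pmf_as_function .
  show ?thesis by transfer (simp add: Let_def)
qed

lemma borel_measurable_pmf_bernoulli_pmf [measurable]:
  "(\<lambda>p. pmf (bernoulli_pmf p) b) \<in> borel_measurable borel"
  unfolding pmf_bernoulli_pmf Let_def by measurable

section \<open>Two flips of a coin with uniform bias\<close>

text \<open>The law of the two flips of one position after integrating out its uniform bias:
  P(1,1) = P(0,0) = 1/3 and P(1,0) = P(0,1) = 1/6, realised as (x, x xor e) with e ~ Bernoulli(1/3).\<close>
definition coin_pair_pmf :: "(bool \<times> bool) pmf" where
  "coin_pair_pmf =
     map_pmf (\<lambda>(x, e). (x, x \<noteq> e)) (pair_pmf (bernoulli_pmf (1/2)) (bernoulli_pmf (1/3)))"

lemma map_fst_coin_pair_pmf: "map_pmf fst coin_pair_pmf = bernoulli_pmf (1/2)"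
  unfolding coin_pair_pmf_def pmf.map_comp by (simp add: o_def case_prod_beta map_fst_pair_pmf)

lemma map_snd_coin_pair_pmf: "map_pmf snd coin_pair_pmf = bernoulli_pmf (1/2)"
proof -
  have "map_pmf snd coin_pair_pmf
      = bernoulli_pmf (1/3) \<bind> (\<lambda>e. map_pmf (\<lambda>x. x \<noteq> e) (bernoulli_pmf (1/2)))"
    unfolding coin_pair_pmf_def pair_pmf_def map_pmf_def
    by (subst bind_commute_pmf) (simp add: bind_assoc_pmf bind_return_pmf)
  also have "\<dots> = bernoulli_pmf (1/2)"
    unfolding map_pmf_xor_bernoulli_half by (rule bind_pmf_const)
  finally show ?thesis .
qed

lemma map_neq_coin_pair_pmf: "map_pmf (\<lambda>(x, y). x \<noteq> y) coin_pair_pmf = bernoulli_pmf (1/3)"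
proof -
  have "(\<lambda>(x, e). x \<noteq> (x \<noteq> e)) = (snd :: bool \<times> bool \<Rightarrow> bool)" by auto
  then show ?thesis
    unfolding coin_pair_pmf_def pmf.map_comp by (simp add: o_def case_prod_beta' map_snd_pair_pmf)
qed

lemma pmf_coin_pair_pmf: "pmf coin_pair_pmf (x, y) = (if x = y then 1/3 else 1/6)"
proof -
  have "pmf coin_pair_pmf ((\<lambda>(x, e). (x, x \<noteq> e)) (x, x \<noteq> y))
      = pmf (pair_pmf (bernoulli_pmf (1/2)) (bernoulli_pmf (1/3))) (x, x \<noteq> y)"
    unfolding coin_pair_pmf_def by (rule pmf_map_inj') (auto simp: inj_on_def)
  then show ?thesis by (auto simp: pmf_pair)
qed

abbreviation uniform01 :: "real measure" where
  "uniform01 \<equiv> uniform_measure lborel {0..1}"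

lemma nn_integral_uniform01_bernoulli_pair:
  "(\<integral>\<^sup>+x. ennreal (pmf (bernoulli_pmf x) b) * ennreal (pmf (bernoulli_pmf x) c) \<partial>uniform01)
     = ennreal (pmf coin_pair_pmf (b, c))"
proof -
  define h :: "real \<Rightarrow> real" where
    "h x = (if b then x else 1 - x) * (if c then x else 1 - x)" for x
  define F :: "real \<Rightarrow> real" where
    "F x = (if b \<noteq> c then x\<^sup>2 / 2 - x ^ 3 / 3 else if b then x ^ 3 / 3 else - ((1 - x) ^ 3 / 3))" for x
  have F': "(F has_real_derivative h x) (at x)" for x
    unfolding F_def h_def
    by (cases b; cases c; simp; auto intro!: derivative_eq_intros simp: power2_eq_square field_simps)
  have "(\<integral>\<^sup>+x. ennreal (pmf (bernoulli_pmf x) b) * ennreal (pmf (bernoulli_pmf x) c) \<partial>uniform01)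
      = (\<integral>\<^sup>+x. ennreal (pmf (bernoulli_pmf x) b) * ennreal (pmf (bernoulli_pmf x) c) * indicator {0..1} x \<partial>lborel)"
    by (subst nn_integral_uniform_measure) (auto simp: divide_ennreal_def)
  also have "\<dots> = (\<integral>\<^sup>+x. ennreal (h x) * indicator {0..1} x \<partial>lborel)"
    by (intro nn_integral_cong)
       (auto simp: h_def indicator_def ennreal_mult'[symmetric] pmf_bernoulli_pmf)
  also have "\<dots> = F 1 - F 0"
  proof (rule nn_integral_FTC_Icc)
    show "(F has_real_derivative h x) (at x)" for x by (rule F')
  qed (auto simp: h_def)
  also have "F 1 - F 0 = pmf coin_pair_pmf (b, c)"
    by (cases b; cases c) (simp_all add: F_def pmf_coin_pair_pmf)
  finally show ?thesis .
qed

section \<open>Mismatches between two increasing windows\<close>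

definition mismatch :: "(nat \<Rightarrow> nat) \<Rightarrow> (nat \<Rightarrow> nat) \<Rightarrow> nat \<Rightarrow> (nat \<Rightarrow> bool \<times> bool) \<Rightarrow> bool" where
  "mismatch a b t f \<longleftrightarrow> fst (f (a t)) \<noteq> snd (f (b t))"

definition mismatches :: "(nat \<Rightarrow> nat) \<Rightarrow> (nat \<Rightarrow> nat) \<Rightarrow> nat \<Rightarrow> (nat \<Rightarrow> bool \<times> bool) \<Rightarrow> nat \<Rightarrow> bool" where
  "mismatches a b w f = (\<lambda>t. t < w \<and> mismatch a b t f)"

definition mismatch_prob :: "(nat \<Rightarrow> nat) \<Rightarrow> (nat \<Rightarrow> nat) \<Rightarrow> nat \<Rightarrow> real" where
  "mismatch_prob a b t = (if a t = b t then 1/3 else 1/2)"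

text \<open>Resampling the larger of the two coordinates leaves the other one as a fixed mask on a
  fair coin, unless both coordinates coincide.\<close>
lemma map_pmf_mismatch_update_max:
  fixes c k l :: "'a::linorder"
  assumes "c = max k l"
  shows "map_pmf (\<lambda>y. fst ((f(c := y)) k) \<noteq> snd ((f(c := y)) l)) coin_pair_pmf
       = bernoulli_pmf (if k = l then 1/3 else 1/2)"
proof (cases k l rule: linorder_cases)
  case less
  then have "(\<lambda>y. fst ((f(c := y)) k) \<noteq> snd ((f(c := y)) l)) = (\<lambda>x. x \<noteq> fst (f k)) \<circ> snd"
    using assms by (auto simp: fun_eq_iff)
  with less show ?thesis
    by (simp only: pmf.map_comp[symmetric] map_snd_coin_pair_pmf map_pmf_xor_bernoulli_half)
       (simp add: less_imp_neq)
next
  case equal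
  then have "(\<lambda>y. fst ((f(c := y)) k) \<noteq> snd ((f(c := y)) l)) = (\<lambda>(x, y). x \<noteq> y)"
    using assms by (auto simp: fun_eq_iff)
  with equal show ?thesis by (simp only: map_neq_coin_pair_pmf) simp
next
  case greater
  then have "(\<lambda>y. fst ((f(c := y)) k) \<noteq> snd ((f(c := y)) l)) = (\<lambda>x. x \<noteq> snd (f l)) \<circ> fst"
    using assms by (auto simp: fun_eq_iff)
  with greater show ?thesis
    by (simp only: pmf.map_comp[symmetric] map_fst_coin_pair_pmf map_pmf_xor_bernoulli_half)
       (simp add: order_less_imp_not_eq2)
qed

lemma map_pmf_mismatches_Pi_pmf:
  assumes "strict_mono_on {..<w} a" "strict_mono_on {..<w} b"
    and "a ` {..<w} \<subseteq> {..<n}" "b ` {..<w} \<subseteq> {..<n}"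
  shows "map_pmf (mismatches a b w) (Pi_pmf {..<n} (False, False) (\<lambda>_. coin_pair_pmf))
       = Pi_pmf {..<w} False (\<lambda>t. bernoulli_pmf (mismatch_prob a b t))"
  using assms
proof (induction w)
  case 0
  then show ?case by (simp add: mismatches_def[abs_def])
next
  case (Suc w)
  define Q where "Q = Pi_pmf {..<n} (False, False) (\<lambda>_. coin_pair_pmf)"
  define c where "c = max (a w) (b w)"
  define P where "P = Pi_pmf ({..<n} - {c}) (False, False) (\<lambda>_. coin_pair_pmf)"
  have c: "c \<in> {..<n}" using Suc.prems(3,4) by (auto simp: c_def)
  have "a t < c \<and> b t < c" if "t < w" for t
    using that Suc.prems(1,2) by (auto simp: c_def less_max_iff_disj intro: strict_mono_onD)
  then have mismatches_upd: "mismatches a b w (f(c := y)) = mismatches a b w f" for f y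
    by (auto simp: mismatches_def mismatch_def fun_eq_iff)
  have "map_pmf (mismatches a b w) Q = Pi_pmf {..<w} False (\<lambda>t. bernoulli_pmf (mismatch_prob a b t))"
    unfolding Q_def using Suc.prems(3,4)
    by (intro Suc.IH monotone_on_subset[OF Suc.prems(1)] monotone_on_subset[OF Suc.prems(2)])
       (simp_all add: subset_eq)
  then have P_law: "map_pmf (mismatches a b w) P = Pi_pmf {..<w} False (\<lambda>t. bernoulli_pmf (mismatch_prob a b t))"
    unfolding Q_def P_def using c mismatches_upd by (simp add: map_pmf_Pi_pmf_remove_irrelevant)
  have mismatches_Suc: "mismatches a b (Suc w) f = (mismatches a b w f)(w := mismatch a b w f)" for f
    by (auto simp: mismatches_def fun_eq_iff)
  have "map_pmf (mismatches a b (Suc w)) Q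
      = map_pmf (\<lambda>(z, F). F(w := z))
          (map_pmf (\<lambda>(y, f). (mismatch a b w (f(c := y)), mismatches a b w f)) (pair_pmf coin_pair_pmf P))"
    unfolding Q_def P_def Pi_pmf_remove[OF finite_lessThan c] pmf.map_comp
    by (intro map_pmf_cong refl) (auto simp: mismatches_Suc mismatches_upd)
  also have "\<dots> = map_pmf (\<lambda>(z, F). F(w := z))
      (pair_pmf (bernoulli_pmf (mismatch_prob a b w)) (Pi_pmf {..<w} False (\<lambda>t. bernoulli_pmf (mismatch_prob a b t))))"
    unfolding P_law[symmetric]
    by (intro arg_cong[where f = "map_pmf _"] map_pair_pmf_fibrewise)
       (simp only: mismatch_def map_pmf_mismatch_update_max[OF c_def] mismatch_prob_def)
  also have "\<dots> = Pi_pmf {..<Suc w} False (\<lambda>t. bernoulli_pmf (mismatch_prob a b t))"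
    by (subst Pi_pmf_insert[symmetric]) (auto simp: lessThan_Suc)
  finally show ?case unfolding Q_def .
qed

lemma sum_mismatch_prob:
  "(\<Sum>t<w. mismatch_prob a b t)
     = real (card {t \<in> {..<w}. a t = b t}) / 3 + real (w - card {t \<in> {..<w}. a t = b t}) / 2"
proof -
  have "card {t \<in> {..<w}. a t \<noteq> b t} = card ({..<w} - {t \<in> {..<w}. a t = b t})"
    by (rule arg_cong[where f = card]) auto
  also have "\<dots> = w - card {t \<in> {..<w}. a t = b t}"
    by (subst card_Diff_subset) auto
  finally have "card {t \<in> {..<w}. a t \<noteq> b t} = w - card {t \<in> {..<w}. a t = b t}" .
  then show ?thesis
    unfolding mismatch_prob_def by (simp add: sum.If_cases Int_def conj_commute)
qed

lemma abs_of_bool_diff: "\<bar>of_bool x - of_bool y :: 'a::linordered_idom\<bar> = of_bool (x \<noteq> y)"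
  by (cases x; cases y) simp_all

section \<open>The coin flips of two traces\<close>

definition flip_space :: "nat \<Rightarrow> ((nat \<times> bool) \<Rightarrow> bool) measure" where
  "flip_space n = PiM ({..<n} \<times> UNIV) (\<lambda>_. count_space UNIV)"

definition biased_flips :: "nat \<Rightarrow> (nat \<Rightarrow> real) \<Rightarrow> ((nat \<times> bool) \<Rightarrow> bool) measure" where
  "biased_flips n p = PiM ({..<n} \<times> UNIV) (\<lambda>kc. measure_pmf (bernoulli_pmf (p (fst kc))))"

lemma coins_dist_eq_bind: "coins_dist n = PiM {..<n} (\<lambda>_. uniform01) \<bind> biased_flips n"
  unfolding coins_dist_def biased_flips_def[abs_def] ..

lemma space_flip_space: "space (flip_space n) = PiE ({..<n} \<times> UNIV) (\<lambda>_. UNIV)"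
  unfolding flip_space_def by (simp add: space_PiM)

lemma finite_space_flip_space: "finite (space (flip_space n))"
  unfolding space_flip_space by (rule finite_PiE) auto

lemma singleton_eq_PiE_flip_space:
  "\<omega> \<in> space (flip_space n) \<Longrightarrow> {\<omega>} = PiE ({..<n} \<times> UNIV) (\<lambda>kc. {\<omega> kc})"
  by (rule PiE_singleton[symmetric]) (auto simp: space_flip_space PiE_def)

lemma sets_flip_space: "sets (flip_space n) = Pow (space (flip_space n))"
proof (intro equalityI subsetI)
  fix X assume "X \<in> Pow (space (flip_space n))"
  then have X: "X \<subseteq> space (flip_space n)" by simp
  then have "X = (\<Union>\<omega>\<in>X. PiE ({..<n} \<times> UNIV) (\<lambda>kc. {\<omega> kc}))"
    using X by (simp add: subset_eq singleton_eq_PiE_flip_space[symmetric] cong: SUP_cong_simp)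
  also have "\<dots> \<in> sets (flip_space n)"
    using finite_subset[OF X finite_space_flip_space] unfolding flip_space_def
    by (intro sets.finite_UN sets_PiM_I_finite) auto
  finally show "X \<in> sets (flip_space n)" .
qed (auto dest: sets.sets_into_space)

lemma sets_biased_flips: "sets (biased_flips n p) = sets (flip_space n)"
  unfolding biased_flips_def flip_space_def by (rule sets_PiM_cong) auto

lemma emeasure_biased_flips_singleton:
  assumes "\<omega> \<in> space (flip_space n)"
  shows "emeasure (biased_flips n p) {\<omega>}
       = (\<Prod>kc\<in>{..<n} \<times> UNIV. ennreal (pmf (bernoulli_pmf (p (fst kc))) (\<omega> kc)))"
proof -
  interpret product_sigma_finite "\<lambda>kc. measure_pmf (bernoulli_pmf (p (fst kc)))"
    by (simp add: product_sigma_finite_def measure_pmf.sigma_finite_measure_axioms)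
  show ?thesis
    unfolding singleton_eq_PiE_flip_space[OF assms] biased_flips_def
    by (subst emeasure_PiM) (auto simp: emeasure_pmf_single)
qed

lemma measurable_biased_flips:
  "biased_flips n \<in> measurable (PiM {..<n} (\<lambda>_. uniform01)) (subprob_algebra (flip_space n))"
proof (rule measurable_subprob_algebra)
  show "subprob_space (biased_flips n p)" for p
    unfolding biased_flips_def
    by (intro prob_space_imp_subprob_space prob_space_PiM measure_pmf.prob_space_axioms)
  show "sets (biased_flips n p) = sets (flip_space n)" for p
    by (rule sets_biased_flips)
next
  fix X assume "X \<in> sets (flip_space n)"
  then have X: "X \<subseteq> space (flip_space n)" by (simp add: sets_flip_space)
  have emeasure_eq: "emeasure (biased_flips n p) X
      = (\<Sum>\<omega>\<in>X. \<Prod>kc\<in>{..<n} \<times> UNIV. ennreal (pmf (bernoulli_pmf (p (fst kc))) (\<omega> kc)))" for p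
  proof -
    have "emeasure (biased_flips n p) X = (\<Sum>\<omega>\<in>X. emeasure (biased_flips n p) {\<omega>})"
      using X finite_subset[OF X finite_space_flip_space]
      by (intro emeasure_eq_sum_singleton) (auto simp: sets_biased_flips sets_flip_space)
    also have "\<dots> = (\<Sum>\<omega>\<in>X. \<Prod>kc\<in>{..<n} \<times> UNIV. ennreal (pmf (bernoulli_pmf (p (fst kc))) (\<omega> kc)))"
      using X by (intro sum.cong refl emeasure_biased_flips_singleton) auto
    finally show ?thesis .
  qed
  have "(\<lambda>p. \<Sum>\<omega>\<in>X. \<Prod>kc\<in>{..<n} \<times> UNIV. ennreal (pmf (bernoulli_pmf (p (fst kc))) (\<omega> kc)))
      \<in> borel_measurable (PiM {..<n} (\<lambda>_. uniform01))"
  proof (rule borel_measurable_sum, rule borel_measurable_prod_ennreal)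
    fix \<omega> and kc :: "nat \<times> bool" assume "kc \<in> {..<n} \<times> UNIV"
    then have "(\<lambda>p. p (fst kc)) \<in> measurable (PiM {..<n} (\<lambda>_. uniform01)) uniform01"
      by (intro measurable_component_singleton) auto
    then have "(\<lambda>p. p (fst kc)) \<in> borel_measurable (PiM {..<n} (\<lambda>_. uniform01))"
      by (simp add: measurable_cong_sets[OF refl sets_uniform_measure])
    from measurable_compose[OF measurable_compose[OF this borel_measurable_pmf_bernoulli_pmf]
        measurable_ennreal]
    show "(\<lambda>p. ennreal (pmf (bernoulli_pmf (p (fst kc))) (\<omega> kc))) \<in> borel_measurable (PiM {..<n} (\<lambda>_. uniform01))" .
  qed
  then show "(\<lambda>p. emeasure (biased_flips n p) X) \<in> borel_measurable (PiM {..<n} (\<lambda>_. uniform01))"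
    unfolding emeasure_eq .
qed

lemma prob_space_PiM_uniform01: "prob_space (PiM I (\<lambda>_. uniform01))"
  by (intro prob_space_PiM prob_space_uniform_measure) auto

lemma sets_coins_dist: "sets (coins_dist n) = sets (flip_space n)"
  unfolding coins_dist_eq_bind
  by (rule sets_bind[OF sets_biased_flips prob_space.not_empty[OF prob_space_PiM_uniform01]])

lemma prod_Times_UNIV_bool:
  fixes g :: "'a \<times> bool \<Rightarrow> 'b::comm_monoid_mult"
  shows "(\<Prod>kc\<in>A \<times> UNIV. g kc) = (\<Prod>k\<in>A. g (k, True) * g (k, False))"
  by (simp add: prod.cartesian_product' UNIV_bool mult.commute)

lemma emeasure_coins_dist_singleton:
  assumes "\<omega> \<in> space (flip_space n)"
  shows "emeasure (coins_dist n) {\<omega>} = (\<Prod>k<n. ennreal (pmf coin_pair_pmf (\<omega> (k, True), \<omega> (k, False))))"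
proof -
  interpret product_sigma_finite "\<lambda>_::nat. uniform01"
    unfolding product_sigma_finite_def
    by (intro allI prob_space_imp_sigma_finite prob_space_uniform_measure) auto
  let ?flip = "\<lambda>c k x. ennreal (pmf (bernoulli_pmf x) (\<omega> (k, c)))"
  have "emeasure (coins_dist n) {\<omega>} = (\<integral>\<^sup>+p. emeasure (biased_flips n p) {\<omega>} \<partial>PiM {..<n} (\<lambda>_. uniform01))"
    unfolding coins_dist_eq_bind
    by (rule emeasure_bind[OF prob_space.not_empty[OF prob_space_PiM_uniform01] measurable_biased_flips])
       (simp add: sets_flip_space assms)
  also have "\<dots> = (\<integral>\<^sup>+p. (\<Prod>k\<in>{..<n}. (\<lambda>k x. ?flip True k x * ?flip False k x) k (p k)) \<partial>PiM {..<n} (\<lambda>_. uniform01))"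
    by (intro nn_integral_cong) (simp add: emeasure_biased_flips_singleton[OF assms] prod_Times_UNIV_bool)
  also have "\<dots> = (\<Prod>k\<in>{..<n}. \<integral>\<^sup>+x. ?flip True k x * ?flip False k x \<partial>uniform01)"
    by (rule product_nn_integral_prod) auto
  also have "\<dots> = (\<Prod>k<n. ennreal (pmf coin_pair_pmf (\<omega> (k, True), \<omega> (k, False))))"
    by (simp only: nn_integral_uniform01_bernoulli_pair)
  finally show ?thesis .
qed

definition pairs_to_flips :: "nat \<Rightarrow> (nat \<Rightarrow> bool \<times> bool) \<Rightarrow> (nat \<times> bool \<Rightarrow> bool)" where
  "pairs_to_flips n f = restrict (\<lambda>(k, c). if c then fst (f k) else snd (f k)) ({..<n} \<times> UNIV)"

lemma coins_dist_eq_distr_Pi_pmf: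
  "coins_dist n = distr (Pi_pmf {..<n} (False, False) (\<lambda>_. coin_pair_pmf)) (flip_space n) (pairs_to_flips n)"
proof (rule measure_eqI_finite)
  let ?Q = "Pi_pmf {..<n} (False, False) (\<lambda>_. coin_pair_pmf)"
  have measurable: "pairs_to_flips n \<in> measurable ?Q (flip_space n)"
    by (auto simp: space_flip_space pairs_to_flips_def)
  show "sets (coins_dist n) = Pow (space (flip_space n))"
    by (simp add: sets_coins_dist sets_flip_space)
  show "sets (distr ?Q (flip_space n) (pairs_to_flips n)) = Pow (space (flip_space n))"
    by (simp add: sets_flip_space)
  show "finite (space (flip_space n))" by (rule finite_space_flip_space)
  fix \<omega> assume \<omega>: "\<omega> \<in> space (flip_space n)"
  define f where "f k = (if k < n then (\<omega> (k, True), \<omega> (k, False)) else (False, False))" for k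
  have flips_f: "pairs_to_flips n f = \<omega>"
  proof
    fix kc :: "nat \<times> bool"
    show "pairs_to_flips n f kc = \<omega> kc"
      using \<omega> by (cases kc) (auto simp: pairs_to_flips_def f_def space_flip_space PiE_def extensional_def)
  qed
  have unique: "g = f" if "g \<in> set_pmf ?Q" "pairs_to_flips n g = \<omega>" for g
  proof
    fix k
    have "pairs_to_flips n g (k, True) = \<omega> (k, True)" "pairs_to_flips n g (k, False) = \<omega> (k, False)"
      using that(2) by simp_all
    then show "g k = f k"
      using that(1) set_Pi_pmf_subset[of "{..<n}" "(False, False)" "\<lambda>_. coin_pair_pmf"]
      by (cases "k < n") (auto simp: pairs_to_flips_def f_def prod_eq_iff)
  qed
  have "emeasure (distr ?Q (flip_space n) (pairs_to_flips n)) {\<omega>} = emeasure ?Q (pairs_to_flips n -` {\<omega>})"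
    using \<omega> measurable by (simp add: emeasure_distr sets_flip_space)
  also have "\<dots> = emeasure ?Q (pairs_to_flips n -` {\<omega>} \<inter> set_pmf ?Q)"
    by (rule emeasure_Int_set_pmf[symmetric])
  also have "pairs_to_flips n -` {\<omega>} \<inter> set_pmf ?Q = {f} \<inter> set_pmf ?Q"
    using flips_f unique by blast
  also have "emeasure ?Q \<dots> = pmf ?Q f"
    by (simp only: emeasure_Int_set_pmf emeasure_pmf_single)
  also have "pmf ?Q f = (\<Prod>k<n. pmf coin_pair_pmf (f k))"
    by (rule pmf_Pi') (auto simp: f_def)
  finally show "emeasure (coins_dist n) {\<omega>} = emeasure (distr ?Q (flip_space n) (pairs_to_flips n)) {\<omega>}"
    using \<omega> by (simp add: emeasure_coins_dist_singleton f_def prod_ennreal)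
qed

lemma prob_coins_dist_mismatches:
  assumes "strict_mono_on {..<w} a" "strict_mono_on {..<w} b"
    and "a ` {..<w} \<subseteq> {..<n}" "b ` {..<w} \<subseteq> {..<n}"
  shows "measure (coins_dist n) {\<omega> \<in> space (coins_dist n). P (\<lambda>t. t < w \<and> \<omega> (a t, True) \<noteq> \<omega> (b t, False))}
       = measure_pmf.prob (Pi_pmf {..<w} False (\<lambda>t. bernoulli_pmf (mismatch_prob a b t))) {z. P z}"
proof -
  let ?Q = "Pi_pmf {..<n} (False, False) (\<lambda>_. coin_pair_pmf)"
  have "(\<lambda>t. t < w \<and> pairs_to_flips n f (a t, True) \<noteq> pairs_to_flips n f (b t, False)) = mismatches a b w f" for f
    using assms(3,4) by (auto simp: pairs_to_flips_def mismatches_def mismatch_def fun_eq_iff)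
  then have "measure (coins_dist n) {\<omega> \<in> space (coins_dist n). P (\<lambda>t. t < w \<and> \<omega> (a t, True) \<noteq> \<omega> (b t, False))}
      = measure_pmf.prob ?Q (mismatches a b w -` {z. P z})"
    unfolding coins_dist_eq_distr_Pi_pmf
    by (subst measure_distr) (auto simp: sets_flip_space space_flip_space pairs_to_flips_def)
  also have "\<dots> = measure_pmf.prob (map_pmf (mismatches a b w) ?Q) {z. P z}"
    by simp
  also have "\<dots> = measure_pmf.prob (Pi_pmf {..<w} False (\<lambda>t. bernoulli_pmf (mismatch_prob a b t))) {z. P z}"
    using assms by (simp only: map_pmf_mismatches_Pi_pmf)
  finally show ?thesis .
qed

lemma strict_mono_on_trace_origin:
  assumes "finite D" "i + w \<le> card D"
  shows "strict_mono_on {..<w} (\<lambda>t. trace_origin D (i + t))"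
proof (rule strict_mono_onI)
  fix s t assume "s \<in> {..<w}" "t \<in> {..<w}" "s < t"
  moreover have "sorted_wrt (<) (sorted_list_of_set D)"
    by (simp add: strict_sorted_iff sorted_sorted_list_of_set distinct_sorted_list_of_set)
  ultimately show "trace_origin D (i + s) < trace_origin D (i + t)"
    unfolding trace_origin_def using assms by (simp add: sorted_wrt_nth_less)
qed

lemma image_trace_origin_subset:
  assumes "D \<subseteq> {..<n}" "i + w \<le> card D"
  shows "(\<lambda>t. trace_origin D (i + t)) ` {..<w} \<subseteq> {..<n}"
proof -
  have "trace_origin D (i + t) \<in> D" if "t < w" for t
    unfolding trace_origin_def using that assms finite_subset[OF assms(1)]
    by (metis add_less_cancel_left length_sorted_list_of_set nth_mem order_less_le_trans
        set_sorted_list_of_set finite_lessThan)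
  then show ?thesis using assms(1) by auto
qed

theorem lemma6:
  fixes n w i j :: nat and Dx Dy :: "nat set" and \<beta> :: real
  assumes "Dx \<subseteq> {..<n}" and "Dy \<subseteq> {..<n}"
    and "i + w \<le> card Dx" and "j + w \<le> card Dy"
    and "\<beta> > 0"
  defines "q \<equiv> card {t \<in> {..<w}. trace_origin Dx (i + t) = trace_origin Dy (j + t)}"
  defines "r \<equiv> w - q"
  shows "measure (coins_dist n)
           {\<omega> \<in> space (coins_dist n).
              \<bar>(\<Sum>t<w. \<bar>(of_bool (\<omega> (trace_origin Dx (i + t), True)) :: real)
                        - of_bool (\<omega> (trace_origin Dy (j + t), False))\<bar>)
               - (real q / 3 + real r / 2)\<bar> \<ge> \<beta>}
         \<le> 2 * exp (- 2 * \<beta>^2 / real w)"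
proof (cases "w = 0")
  case True
  then show ?thesis using \<open>\<beta> > 0\<close> by (simp add: q_def r_def)
next
  case False
  define a where "a t = trace_origin Dx (i + t)" for t
  define b where "b t = trace_origin Dy (j + t)" for t
  have "strict_mono_on {..<w} a" "strict_mono_on {..<w} b"
    using assms(1-4) unfolding a_def b_def
    by (auto intro!: strict_mono_on_trace_origin dest: finite_subset)
  moreover have "a ` {..<w} \<subseteq> {..<n}" "b ` {..<w} \<subseteq> {..<n}"
    unfolding a_def b_def
    by (rule image_trace_origin_subset[OF assms(1,3)] image_trace_origin_subset[OF assms(2,4)])+
  ultimately have "measure (coins_dist n) {\<omega> \<in> space (coins_dist n).
        \<beta> \<le> \<bar>(\<Sum>t<w. of_bool (t < w \<and> \<omega> (a t, True) \<noteq> \<omega> (b t, False)) :: real) - (\<Sum>t<w. mismatch_prob a b t)\<bar>}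
      = measure_pmf.prob (Pi_pmf {..<w} False (\<lambda>t. bernoulli_pmf (mismatch_prob a b t)))
          {z. \<beta> \<le> \<bar>(\<Sum>t<w. of_bool (z t) :: real) - (\<Sum>t<w. mismatch_prob a b t)\<bar>}"
    by (rule prob_coins_dist_mismatches)
  also have "\<dots> \<le> 2 * exp (- 2 * \<beta>^2 / real (card {..<w}))"
    using False \<open>\<beta> > 0\<close> by (intro Hoeffding_Pi_pmf_bernoulli) (auto simp: mismatch_prob_def)
  finally show ?thesis
    by (simp add: sum_mismatch_prob q_def r_def a_def b_def abs_of_bool_diff)
qed

end
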